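(* Let $G=(V,E)$ be a finite, simple, undirected, unweighted graph, let $h$ be a positive integer, let $v\in V$, let $u\in N_v^h(G)$ and put $s=dis_G(u,v)$. Then for every $w\in N_v^{h-s}(G)$, $$dis_{G(V\setminus\{v\})}(u,w)\le h \iff dis_{G(N_v^h(G))}(u,w)\le h .$$ Consequently, with $F_u=\{w\in N_v^{h-s}(G): dis_{G(V\setminus\{v\})}(u,w)>h\}$, one has $F_u=\{w\in N_v^{h-s}(G): dis_{G(N_v^h(G))}(u,w)>h\}$ and $$d_u^h\big(G(V\setminus\{v\})\big)=d_u^h(G)-1-\big|\{w\in N_v^{h-s}(G): dis_{G(N_v^h(G))}(u,w)>h\}\big|.$$
   Context: For a graph $H$ and vertices $x,y$ of $H$, $dis_H(x,y)$ denotes the shortest-path distance between $x$ and $y$ in $H$ (equal to $+\infty$ if no path exists). For a nonnegative integer $t$, the $t$-hop neighborhood of a vertex $x$ in $H=(V_H,E_H)$ is $N_x^t(H)=\{y\in V_H : y\neq x,\ dis_H(x,y)\le t\}$, and the $t$-hop degree is $d_x^t(H)=|N_x^t(H)|$. For $S\subseteq V$, $G(S)$ denotes the subgraph of $G$ induced by $S$. *)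

theory Defs
  imports Main "HOL-Library.Extended_Nat"
begin

definition simple_graph :: "'a set \<Rightarrow> ('a \<Rightarrow> 'a \<Rightarrow> bool) \<Rightarrow> bool" where
  "simple_graph V E \<longleftrightarrow> finite V \<and> (\<forall>x y. E x y \<longrightarrow> x \<in> V \<and> y \<in> V)
     \<and> (\<forall>x y. E x y \<longrightarrow> E y x) \<and> (\<forall>x. \<not> E x x)"

definition is_walk :: "('a \<Rightarrow> 'a \<Rightarrow> bool) \<Rightarrow> 'a set \<Rightarrow> 'a \<Rightarrow> 'a \<Rightarrow> 'a list \<Rightarrow> bool" where
  "is_walk E S x y p \<longleftrightarrow> p \<noteq> [] \<and> hd p = x \<and> last p = y \<and> set p \<subseteq> S
     \<and> (\<forall>i. Suc i < length p \<longrightarrow> E (p ! i) (p ! Suc i))"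

text \<open>Shortest-path distance in the induced subgraph G(S); infinity if no path.\<close>
definition dis :: "('a \<Rightarrow> 'a \<Rightarrow> bool) \<Rightarrow> 'a set \<Rightarrow> 'a \<Rightarrow> 'a \<Rightarrow> enat" where
  "dis E S x y = (INF p \<in> {p. is_walk E S x y p}. enat (length p - 1))"

definition nbhd :: "('a \<Rightarrow> 'a \<Rightarrow> bool) \<Rightarrow> 'a set \<Rightarrow> 'a \<Rightarrow> nat \<Rightarrow> 'a set" where
  "nbhd E S x t = {y \<in> S. y \<noteq> x \<and> dis E S x y \<le> enat t}"

definition hdeg :: "('a \<Rightarrow> 'a \<Rightarrow> bool) \<Rightarrow> 'a set \<Rightarrow> 'a \<Rightarrow> nat \<Rightarrow> nat" where
  "hdeg E S x t = card (nbhd E S x t)"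

end

theory Submission
  imports Defs
begin

text \<open>If a short walk from \<open>u\<close> to \<open>w\<close> avoids \<open>v\<close>, then each of its vertices \<open>x\<close> is reached
  from \<open>v\<close> within \<open>h\<close> steps: either through \<open>u\<close> (\<open>s\<close> steps plus the part of the walk before \<open>x\<close>)
  or through \<open>w\<close> (\<open>h - s\<close> steps plus the part after \<open>x\<close>), and the two routes have total
  length at most \<open>2h\<close>. Hence the walk lives in \<open>N\<^sub>v\<^sup>h\<close>, and the two induced subgraphs agree on
  which \<open>w\<close> are within distance \<open>h\<close> of \<open>u\<close>. Deleting \<open>v\<close> removes \<open>v\<close> itself from the \<open>h\<close>-hop
  neighbourhood of \<open>u\<close>, and removes another vertex \<open>y\<close> only if every short path to \<open>y\<close> passes
  through \<open>v\<close>, which forces \<open>y \<in> N\<^sub>v\<^sup>h\<^sup>-\<^sup>s\<close>.\<close>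

lemma is_walk_iff_successively:
  "is_walk E S x y p \<longleftrightarrow> p \<noteq> [] \<and> hd p = x \<and> last p = y \<and> set p \<subseteq> S \<and> successively E p"
  unfolding is_walk_def successively_conv_nth by simp

lemma is_walk_singleton: "x \<in> S \<Longrightarrow> is_walk E S x x [x]"
  unfolding is_walk_def by simp

lemma is_walk_subset: "is_walk E S x y p \<Longrightarrow> set p \<subseteq> T \<Longrightarrow> is_walk E T x y p"
  unfolding is_walk_def by auto

lemma is_walk_mono: "is_walk E S x y p \<Longrightarrow> S \<subseteq> T \<Longrightarrow> is_walk E T x y p"
  unfolding is_walk_def by auto

lemma is_walk_rev:
  assumes "symp E" and "is_walk E S x y p"
  shows "is_walk E S y x (rev p)"
proof -
  have "successively (\<lambda>a b. E b a) p"
    using assms(2) sympD[OF assms(1)] unfolding is_walk_iff_successively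
    by (blast intro: successively_mono)
  then show ?thesis using assms(2) by (simp add: is_walk_iff_successively hd_rev last_rev)
qed

lemma is_walk_append:
  "is_walk E S x y p \<Longrightarrow> is_walk E S y z q \<Longrightarrow> is_walk E S x z (p @ tl q)"
  unfolding is_walk_iff_successively
  by (cases q; cases "tl q") (auto simp: successively_append_iff successively_Cons last_append)

lemma is_walk_split:
  assumes "is_walk E S x y p" and "z \<in> set p"
  obtains p1 p2 where "is_walk E S x z p1" "is_walk E S z y p2"
    "length p1 + length p2 = Suc (length p)"
proof -
  obtain xs ys where p: "p = xs @ z # ys" using split_list[OF assms(2)] by auto
  have "is_walk E S x z (xs @ [z])" "is_walk E S z y (z # ys)"
    using assms(1) unfolding is_walk_iff_successively p
    by (auto simp: successively_append_iff successively_Cons hd_append split: if_splits)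
  then show thesis by (rule that) (simp add: p)
qed

lemma dis_le_length: "is_walk E S x y p \<Longrightarrow> dis E S x y \<le> enat (length p - 1)"
  unfolding dis_def by (rule INF_lower) simp

lemma dis_attained:
  assumes "is_walk E S x y p"
  obtains q where "is_walk E S x y q" "dis E S x y = enat (length q - 1)"
proof -
  have "dis E S x y \<in> (\<lambda>q. enat (length q - 1)) ` {q. is_walk E S x y q}"
    unfolding dis_def using assms by (intro wellorder_InfI) blast
  then show thesis using that by blast
qed

lemma dis_le_enat_iff:
  "dis E S x y \<le> enat n \<longleftrightarrow> (\<exists>p. is_walk E S x y p \<and> length p \<le> Suc n)"
proof
  assume le: "dis E S x y \<le> enat n"
  have "{p. is_walk E S x y p} \<noteq> {}"
  proof
    assume none: "{p. is_walk E S x y p} = {}"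
    have "dis E S x y = \<infinity>" unfolding dis_def none by (simp add: top_enat_def)
    with le show False by simp
  qed
  then obtain p where "is_walk E S x y p" by blast
  then obtain q where q: "is_walk E S x y q" "dis E S x y = enat (length q - 1)"
    by (rule dis_attained)
  with le show "\<exists>p. is_walk E S x y p \<and> length p \<le> Suc n" by auto
next
  assume "\<exists>p. is_walk E S x y p \<and> length p \<le> Suc n"
  then obtain p where p: "is_walk E S x y p" "length p \<le> Suc n" by blast
  have "dis E S x y \<le> enat (length p - 1)" by (rule dis_le_length[OF p(1)])
  also have "\<dots> \<le> enat n" using p(2) by simp
  finally show "dis E S x y \<le> enat n" .
qed

lemma dis_mono: "S \<subseteq> T \<Longrightarrow> dis E T x y \<le> dis E S x y"
  unfolding dis_def by (intro INF_superset_mono) (auto intro: is_walk_mono)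

lemma dis_self: "x \<in> S \<Longrightarrow> dis E S x x = 0"
  using dis_le_length[OF is_walk_singleton, of x S E] by (simp flip: zero_enat_def)

lemma dis_commute:
  assumes "symp E"
  shows "dis E S x y = dis E S y x"
proof -
  have le: "dis E S a b \<le> dis E S b a" for a b
    unfolding dis_def[of E S b a]
    using dis_le_length[OF is_walk_rev[OF assms]] by (intro INF_greatest) simp
  show ?thesis using le[of x y] le[of y x] by (rule antisym)
qed

lemma dis_triangle: "dis E S x z \<le> dis E S x y + dis E S y z"
proof (cases "dis E S x y" ; cases "dis E S y z")
  fix a b assume a: "dis E S x y = enat a" and b: "dis E S y z = enat b"
  obtain p where p: "is_walk E S x y p" "length p \<le> Suc a"
    using a dis_le_enat_iff[of E S x y a] by auto
  obtain q where q: "is_walk E S y z q" "length q \<le> Suc b"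
    using b dis_le_enat_iff[of E S y z b] by auto
  have "q \<noteq> []" using q(1) by (simp add: is_walk_def)
  then have "length (p @ tl q) \<le> Suc (a + b)" using p(2) q(2) by simp
  with is_walk_append[OF p(1) q(1)] have "dis E S x z \<le> enat (a + b)"
    unfolding dis_le_enat_iff by blast
  then show ?thesis by (simp add: a b)
qed simp_all

lemma dis_through_walk_vertex:
  assumes "is_walk E S x y p" and "z \<in> set p"
  shows "dis E S x z + dis E S z y \<le> enat (length p - 1)"
proof -
  obtain p1 p2 where p12: "is_walk E S x z p1" "is_walk E S z y p2"
    "length p1 + length p2 = Suc (length p)"
    using assms by (rule is_walk_split)
  have "length p1 > 0" "length p2 > 0" using p12 by (auto simp: is_walk_def)
  then have "length p1 - 1 + (length p2 - 1) = length p - 1"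
    using p12(3) by linarith
  then have "enat (length p1 - 1) + enat (length p2 - 1) = enat (length p - 1)"
    by simp
  then show ?thesis using dis_le_length[OF p12(1)] dis_le_length[OF p12(2)]
    by (metis add_mono)
qed

lemma dis_delete_vertex_cases:
  assumes "dis E S x y \<le> enat n"
  shows "dis E (S - {z}) x y \<le> enat n \<or> dis E S x z + dis E S z y \<le> enat n"
proof -
  obtain p where p: "is_walk E S x y p" "length p \<le> Suc n"
    using assms unfolding dis_le_enat_iff by blast
  show ?thesis
  proof (cases "z \<in> set p")
    case True
    have "enat (length p - 1) \<le> enat n" using p(2) by simp
    with dis_through_walk_vertex[OF p(1) True] show ?thesis by (blast intro: order.trans)
  next
    case False
    then have "is_walk E (S - {z}) x y p" using p(1) by (auto simp: is_walk_def)
    then show ?thesis using p(2) unfolding dis_le_enat_iff by blast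
  qed
qed

lemma walk_vertex_dis_le:
  assumes "symp E" and "is_walk E S x y p" and "length p \<le> Suc n" and "z \<in> set p"
    and "dis E S c x \<le> enat a" and "dis E S c y \<le> enat b" and "a + b + n \<le> 2 * h"
  shows "dis E S c z \<le> enat h"
proof -
  obtain d1 d2 where d1: "dis E S x z = enat d1" and d2: "dis E S z y = enat d2"
    and "d1 + d2 \<le> n"
    using dis_through_walk_vertex[OF assms(2,4)] assms(3)
    by (cases "dis E S x z"; cases "dis E S z y") auto
  then have "a + d1 \<le> h \<or> b + d2 \<le> h" using assms(7) by linarith
  then show ?thesis
  proof
    assume "a + d1 \<le> h"
    have "dis E S c z \<le> dis E S c x + dis E S x z" by (rule dis_triangle)
    also have "\<dots> \<le> enat a + enat d1" unfolding d1 by (rule add_right_mono[OF assms(5)])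
    also have "\<dots> \<le> enat h" using \<open>a + d1 \<le> h\<close> by simp
    finally show ?thesis .
  next
    assume "b + d2 \<le> h"
    have "dis E S c z \<le> dis E S c y + dis E S y z" by (rule dis_triangle)
    also have "\<dots> \<le> enat b + enat d2"
      unfolding dis_commute[OF assms(1), of S y z] d2 by (rule add_right_mono[OF assms(6)])
    also have "\<dots> \<le> enat h" using \<open>b + d2 \<le> h\<close> by simp
    finally show ?thesis .
  qed
qed

lemma nbhd_subset: "nbhd E S x t \<subseteq> S - {x}"
  unfolding nbhd_def by auto

lemma avoiding_walk_in_nbhd:
  assumes "symp E" and "dis E V v u \<le> enat s" and "s \<le> h"
    and "w \<in> nbhd E V v (h - s)"
    and "is_walk E (V - {v}) u w p" and "length p \<le> Suc h"
  shows "set p \<subseteq> nbhd E V v h"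
proof
  fix z assume z: "z \<in> set p"
  have "dis E V v w \<le> enat (h - s)" using assms(4) by (simp add: nbhd_def)
  moreover have "is_walk E V u w p" using assms(5) Diff_subset by (rule is_walk_mono)
  ultimately have "dis E V v z \<le> enat h"
    using walk_vertex_dis_le[OF assms(1) _ assms(6) z assms(2), of _ "h - s" h] assms(3)
    by simp
  moreover have "z \<in> V - {v}" using assms(5) z by (auto simp: is_walk_def)
  ultimately show "z \<in> nbhd E V v h" by (simp add: nbhd_def)
qed

lemma dis_delete_le_iff_dis_nbhd_le:
  assumes "symp E" and "dis E V v u \<le> enat s" and "s \<le> h"
    and "w \<in> nbhd E V v (h - s)"
  shows "dis E (V - {v}) u w \<le> enat h \<longleftrightarrow> dis E (nbhd E V v h) u w \<le> enat h"
proof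
  assume "dis E (V - {v}) u w \<le> enat h"
  then obtain p where p: "is_walk E (V - {v}) u w p" "length p \<le> Suc h"
    unfolding dis_le_enat_iff by blast
  then have "is_walk E (nbhd E V v h) u w p"
    using avoiding_walk_in_nbhd[OF assms] by (blast intro: is_walk_subset)
  then show "dis E (nbhd E V v h) u w \<le> enat h" using p(2) unfolding dis_le_enat_iff by blast
next
  assume "dis E (nbhd E V v h) u w \<le> enat h"
  with dis_mono[OF nbhd_subset] show "dis E (V - {v}) u w \<le> enat h"
    by (rule order.trans)
qed

lemma hdeg_delete_vertex:
  assumes "finite V" and "v \<in> V" and "u \<in> V" and "u \<noteq> v"
    and "dis E V u v = enat s" and "s \<le> h"
  defines "F \<equiv> {w \<in> nbhd E V v (h - s). enat h < dis E (V - {v}) u w}"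
  shows "int (hdeg E (V - {v}) u h) = int (hdeg E V u h) - 1 - int (card F)"
proof -
  define B where "B = nbhd E V u h"
  have "finite B" using assms(1) by (simp add: B_def nbhd_def)
  have "v \<in> B" using assms(2,4,5,6) by (simp add: B_def nbhd_def)
  have F_sub: "F \<subseteq> B - {v}"
  proof
    fix w assume w: "w \<in> F"
    have vw: "dis E V v w \<le> enat (h - s)" using w by (simp add: F_def nbhd_def)
    have "dis E V u w \<le> dis E V u v + dis E V v w" by (rule dis_triangle)
    also have "\<dots> \<le> enat s + enat (h - s)" unfolding assms(5) by (rule add_left_mono[OF vw])
    also have "\<dots> = enat h" using assms(6) by simp
    finally have "dis E V u w \<le> enat h" .
    moreover have "w \<noteq> u" using w dis_self[of u "V - {v}" E] assms(3,4) by (auto simp: F_def)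
    ultimately show "w \<in> B - {v}" using w assms(6) by (auto simp: F_def B_def nbhd_def)
  qed
  have nbhd_delete: "nbhd E (V - {v}) u h = B - {v} - F"
  proof (intro equalityI subsetI)
    fix y assume "y \<in> nbhd E (V - {v}) u h"
    then show "y \<in> B - {v} - F"
      using dis_mono[of "V - {v}" V E u y] by (auto simp: B_def F_def nbhd_def)
  next
    fix y assume y: "y \<in> B - {v} - F"
    then have "dis E V u y \<le> enat h" by (simp add: B_def nbhd_def)
    then have "dis E (V - {v}) u y \<le> enat h \<or> enat s + dis E V v y \<le> enat h"
      using dis_delete_vertex_cases[of E V u y h v] assms(5) by simp
    moreover have "enat s + dis E V v y \<le> enat h \<Longrightarrow> dis E (V - {v}) u y \<le> enat h"
      using y by (cases "dis E V v y") (auto simp: B_def F_def nbhd_def)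
    ultimately show "y \<in> nbhd E (V - {v}) u h" using y by (auto simp: B_def nbhd_def)
  qed
  have "card (B - {v} - F) = card B - 1 - card F"
    using F_sub \<open>finite B\<close> \<open>v \<in> B\<close> by (simp add: card_Diff_subset finite_subset)
  moreover have "card F \<le> card B - 1"
    using F_sub \<open>finite B\<close> \<open>v \<in> B\<close> card_mono[of "B - {v}" F] by simp
  moreover have "card B \<ge> 1" using \<open>finite B\<close> \<open>v \<in> B\<close> by (auto simp: Suc_le_eq card_gt_0_iff)
  ultimately show ?thesis unfolding hdeg_def nbhd_delete B_def[symmetric] by linarith
qed

theorem mainTheorem4:
  fixes V :: "'a set" and E :: "'a \<Rightarrow> 'a \<Rightarrow> bool" and h s :: nat and u v :: 'a
  assumes "simple_graph V E"
    and "h > 0"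
    and "v \<in> V"
    and "u \<in> nbhd E V v h"
    and "dis E V u v = enat s"
  shows "(\<forall>w \<in> nbhd E V v (h - s).
            dis E (V - {v}) u w \<le> enat h \<longleftrightarrow> dis E (nbhd E V v h) u w \<le> enat h)
       \<and> {w \<in> nbhd E V v (h - s). dis E (V - {v}) u w > enat h}
           = {w \<in> nbhd E V v (h - s). dis E (nbhd E V v h) u w > enat h}
       \<and> int (hdeg E (V - {v}) u h)
           = int (hdeg E V u h) - 1
             - int (card {w \<in> nbhd E V v (h - s). dis E (nbhd E V v h) u w > enat h})"
proof -
  have sym: "symp E" and "finite V"
    using assms(1) by (auto simp: simple_graph_def symp_def)
  have "u \<in> V" "u \<noteq> v" using assms(4) by (auto simp: nbhd_def)
  have vu: "dis E V v u = enat s" using assms(5) dis_commute[OF sym, of V v u] by simp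
  then have "s \<le> h" using assms(4) by (simp add: nbhd_def)
  have iff: "\<forall>w \<in> nbhd E V v (h - s).
      dis E (V - {v}) u w \<le> enat h \<longleftrightarrow> dis E (nbhd E V v h) u w \<le> enat h"
    using dis_delete_le_iff_dis_nbhd_le[OF sym _ \<open>s \<le> h\<close>] vu by simp
  then have F_eq: "{w \<in> nbhd E V v (h - s). dis E (V - {v}) u w > enat h}
      = {w \<in> nbhd E V v (h - s). dis E (nbhd E V v h) u w > enat h}"
    by (auto simp: not_le[symmetric])
  show ?thesis
    using iff F_eq hdeg_delete_vertex[OF \<open>finite V\<close> assms(3) \<open>u \<in> V\<close> \<open>u \<noteq> v\<close> assms(5) \<open>s \<le> h\<close>]
    by simp
qed

end
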